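(* Let $\Sigma$ be a finite alphabet with $k=|\Sigma|$, and let $h:\Sigma\to\{1,\dots,k\}$ be a fixed bijection. Two NFAs $\mathcal{A}_1$ and $\mathcal{A}_2$ over $\Sigma$ are isomorphic if and only if the directed graphs $G_{\mathcal{A}_1}$ and $G_{\mathcal{A}_2}$ are isomorphic.
   Context: An NFA over $\Sigma$ is a tuple $(Q,\Sigma,\Delta,I,F)$ with $Q$ finite, $\Delta\subseteq Q\times\Sigma\times Q$, $I,F\subseteq Q$. Two NFAs are isomorphic if there is a bijection $\varphi$ between their state sets mapping initial states onto initial states, final states onto final states, and with $(p,a,q)\in\Delta_1\iff(\varphi(p),a,\varphi(q))\in\Delta_2$. For $\mathcal{A}=(Q,\Sigma,\Delta,I,F)$, the directed graph (loops allowed) $G_\mathcal{A}=(V,E)$ has as vertex set the disjoint union of: $Q$; $\Delta$ (each transition is a vertex); the vertices $(q,i)$ for $q\in I\setminus F$, $1\le i\le k+1$, for $q\in F\setminus I$, $1\le i\le k+2$, and for $q\in I\cap F$, $1\le i\le k+3$; and the vertices $(t,i)$ for $t=(p,a,q)\in\Delta$, $1\le i\le h(a)$. Its edges are: $(p,t)$ and $(t,q)$ for each $t=(p,a,q)\in\Delta$; $(t,(t,1))$ for each $t\in\Delta$; $((t,i),(t,j))$ for all $t=(p,a,q)\in\Delta$ and all $1\le i,j\le h(a)$; $((q,i),(q,j))$ for all $q\in I\cup F$ and all $i,j$ in the range given for $q$ above; and $(q,(q,1))$ for each $q\in I\cup F$. Two directed graphs are isomorphic if there is a bijection of vertex sets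 preserving edges in both directions. *)

theory Defs
  imports Main
begin

record ('q, 'a) nfa =
  states :: "'q set"
  trans  :: "('q \<times> 'a \<times> 'q) set"
  init   :: "'q set"
  fin    :: "'q set"

definition nfa_wf :: "'a set \<Rightarrow> ('q, 'a) nfa \<Rightarrow> bool" where
  "nfa_wf Sig A \<longleftrightarrow> finite (states A) \<and>
     trans A \<subseteq> states A \<times> Sig \<times> states A \<and>
     init A \<subseteq> states A \<and> fin A \<subseteq> states A"

definition nfa_iso :: "('q1, 'a) nfa \<Rightarrow> ('q2, 'a) nfa \<Rightarrow> bool" where
  "nfa_iso A1 A2 \<longleftrightarrow> (\<exists>\<phi>. bij_betw \<phi> (states A1) (states A2) \<and>
     \<phi> ` init A1 = init A2 \<and> \<phi> ` fin A1 = fin A2 \<and>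
     (\<forall>p\<in>states A1. \<forall>a. \<forall>q\<in>states A1.
        (p, a, q) \<in> trans A1 \<longleftrightarrow> (\<phi> p, a, \<phi> q) \<in> trans A2))"

type_synonym 'v digraph = "'v set \<times> ('v \<times> 'v) set"

definition digraph_iso :: "'v digraph \<Rightarrow> 'w digraph \<Rightarrow> bool" where
  "digraph_iso G1 G2 \<longleftrightarrow> (\<exists>f. bij_betw f (fst G1) (fst G2) \<and>
     (\<forall>u\<in>fst G1. \<forall>v\<in>fst G1. (u, v) \<in> snd G1 \<longleftrightarrow> (f u, f v) \<in> snd G2))"

datatype ('q, 'a) gvert =
    St 'q
  | Tr "'q \<times> 'a \<times> 'q"
  | SAux 'q nat
  | TAux "'q \<times> 'a \<times> 'q" nat

text \<open>Number of auxiliary vertices attached to a state q.\<close>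
definition state_cnt :: "nat \<Rightarrow> ('q, 'a) nfa \<Rightarrow> 'q \<Rightarrow> nat" where
  "state_cnt k A q =
     (if q \<in> init A - fin A then k + 1
      else if q \<in> fin A - init A then k + 2
      else if q \<in> init A \<inter> fin A then k + 3 else 0)"

definition lbl :: "'q \<times> 'a \<times> 'q \<Rightarrow> 'a" where
  "lbl t = fst (snd t)"

definition nfa_graph :: "('a \<Rightarrow> nat) \<Rightarrow> nat \<Rightarrow> ('q, 'a) nfa \<Rightarrow> ('q, 'a) gvert digraph" where
  "nfa_graph h k A =
    (St ` states A \<union> Tr ` trans A
       \<union> {SAux q i | q i. q \<in> init A \<union> fin A \<and> 1 \<le> i \<and> i \<le> state_cnt k A q}
       \<union> {TAux t i | t i. t \<in> trans A \<and> 1 \<le> i \<and> i \<le> h (lbl t)},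
     {(St p, Tr (p, a, q)) | p a q. (p, a, q) \<in> trans A}
       \<union> {(Tr (p, a, q), St q) | p a q. (p, a, q) \<in> trans A}
       \<union> {(Tr t, TAux t 1) | t. t \<in> trans A}
       \<union> {(TAux t i, TAux t j) | t i j. t \<in> trans A \<and> 1 \<le> i \<and> i \<le> h (lbl t)
                                     \<and> 1 \<le> j \<and> j \<le> h (lbl t)}
       \<union> {(SAux q i, SAux q j) | q i j. q \<in> init A \<union> fin A
             \<and> 1 \<le> i \<and> i \<le> state_cnt k A q \<and> 1 \<le> j \<and> j \<le> state_cnt k A q}
       \<union> {(St q, SAux q 1) | q. q \<in> init A \<union> fin A})"

end

theory Submission
  imports Defs
begin

text \<open>An automaton isomorphism lifts to the graphs by renaming the states inside every vertex.
  Conversely, a graph isomorphism preserves loops, out-degrees and the set of out-degrees of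
  looped successors. The looped vertices are exactly the auxiliary ones; a state vertex has at
  most one looped successor, of out-degree \<open>k + 1\<close>, \<open>k + 2\<close> or \<open>k + 3\<close> according to whether
  it is initial, final or both, while a transition vertex has exactly one, of out-degree
  \<open>h a \<le> k\<close> for its label \<open>a\<close>. So state vertices go to state vertices, which yields a bijection of
  states respecting initial and final states, and transition vertices go to transition vertices,
  whose endpoints are forced by the edges to and from state vertices and whose label is forced by
  the injectivity of \<open>h\<close>.\<close>

lemma image_eq_if_bij_betw_mem_iff:
  assumes "bij_betw f S T" "X \<subseteq> S" "Y \<subseteq> T" "\<And>x. x \<in> S \<Longrightarrow> f x \<in> Y \<longleftrightarrow> x \<in> X"
  shows "f ` X = Y"
  using assms by (fastforce simp: bij_betw_def)

section \<open>Invariants of digraph isomorphisms\<close>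

definition has_loop :: "('v \<times> 'v) set \<Rightarrow> 'v \<Rightarrow> bool" where
  "has_loop E v \<longleftrightarrow> (v, v) \<in> E"

definition out_degree :: "('v \<times> 'v) set \<Rightarrow> 'v \<Rightarrow> nat" where
  "out_degree E v = card {w. (v, w) \<in> E}"

definition loop_successor_degrees :: "('v \<times> 'v) set \<Rightarrow> 'v \<Rightarrow> nat set" where
  "loop_successor_degrees E v = out_degree E ` {w. (v, w) \<in> E \<and> has_loop E w}"

locale digraph_isomorphism =
  fixes V1 :: "'v set" and E1 :: "('v \<times> 'v) set"
    and V2 :: "'w set" and E2 :: "('w \<times> 'w) set"
    and f :: "'v \<Rightarrow> 'w"
  assumes bij: "bij_betw f V1 V2"
    and edge_iff: "\<And>u v. u \<in> V1 \<Longrightarrow> v \<in> V1 \<Longrightarrow> (u, v) \<in> E1 \<longleftrightarrow> (f u, f v) \<in> E2"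
    and edges1: "E1 \<subseteq> V1 \<times> V1" and edges2: "E2 \<subseteq> V2 \<times> V2"
begin

lemma has_loop_iff: "v \<in> V1 \<Longrightarrow> has_loop E2 (f v) \<longleftrightarrow> has_loop E1 v"
  by (simp add: has_loop_def edge_iff)

lemma successors_image:
  assumes "v \<in> V1"
  shows "{w. (f v, w) \<in> E2} = f ` {w. (v, w) \<in> E1}"
proof -
  have "{w. (f v, w) \<in> E2} = {w \<in> f ` V1. (f v, w) \<in> E2}"
    using edges2 bij by (auto simp: bij_betw_def)
  also have "\<dots> = f ` {w \<in> V1. (v, w) \<in> E1}"
    using assms edge_iff by auto
  also have "{w \<in> V1. (v, w) \<in> E1} = {w. (v, w) \<in> E1}"
    using edges1 by auto
  finally show ?thesis .
qed

lemma out_degree_eq: "v \<in> V1 \<Longrightarrow> out_degree E2 (f v) = out_degree E1 v"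
proof -
  assume v: "v \<in> V1"
  have "inj_on f {w. (v, w) \<in> E1}"
    using bij edges1 by (blast intro: inj_on_subset dest: bij_betw_imp_inj_on)
  then show ?thesis
    by (simp add: out_degree_def successors_image[OF v] card_image)
qed

lemma loop_successor_degrees_eq:
  assumes v: "v \<in> V1"
  shows "loop_successor_degrees E2 (f v) = loop_successor_degrees E1 v"
proof -
  have "{w. (f v, w) \<in> E2 \<and> has_loop E2 w} = {w \<in> f ` {w. (v, w) \<in> E1}. has_loop E2 w}"
    using successors_image[OF v] by auto
  also have "\<dots> = f ` {w. (v, w) \<in> E1 \<and> has_loop E1 w}"
    using edges1 has_loop_iff by auto
  finally have loops: "{w. (f v, w) \<in> E2 \<and> has_loop E2 w} = f ` {w. (v, w) \<in> E1 \<and> has_loop E1 w}" .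
  have "out_degree E2 (f w) = out_degree E1 w" if "(v, w) \<in> E1" for w
    using that edges1 out_degree_eq by auto
  then show ?thesis
    unfolding loop_successor_degrees_def loops image_image by (auto intro: image_cong)
qed

end

section \<open>The graph of an automaton\<close>

fun nfa_vertex :: "('a \<Rightarrow> nat) \<Rightarrow> nat \<Rightarrow> ('q, 'a) nfa \<Rightarrow> ('q, 'a) gvert \<Rightarrow> bool" where
  "nfa_vertex h k A (St q) \<longleftrightarrow> q \<in> states A"
| "nfa_vertex h k A (Tr t) \<longleftrightarrow> t \<in> trans A"
| "nfa_vertex h k A (SAux q i) \<longleftrightarrow> q \<in> init A \<union> fin A \<and> 1 \<le> i \<and> i \<le> state_cnt k A q"
| "nfa_vertex h k A (TAux t i) \<longleftrightarrow> t \<in> trans A \<and> 1 \<le> i \<and> i \<le> h (lbl t)"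

fun nfa_edge :: "('a \<Rightarrow> nat) \<Rightarrow> nat \<Rightarrow> ('q, 'a) nfa \<Rightarrow> ('q, 'a) gvert \<Rightarrow> ('q, 'a) gvert \<Rightarrow> bool" where
  "nfa_edge h k A (St p) (Tr t) \<longleftrightarrow> t \<in> trans A \<and> fst t = p"
| "nfa_edge h k A (Tr t) (St q) \<longleftrightarrow> t \<in> trans A \<and> snd (snd t) = q"
| "nfa_edge h k A (Tr t) (TAux t' i) \<longleftrightarrow> t \<in> trans A \<and> t' = t \<and> i = 1"
| "nfa_edge h k A (TAux t i) (TAux t' j) \<longleftrightarrow>
     t \<in> trans A \<and> t' = t \<and> 1 \<le> i \<and> i \<le> h (lbl t) \<and> 1 \<le> j \<and> j \<le> h (lbl t)"
| "nfa_edge h k A (SAux q i) (SAux q' j) \<longleftrightarrow>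
     q \<in> init A \<union> fin A \<and> q' = q \<and> 1 \<le> i \<and> i \<le> state_cnt k A q \<and> 1 \<le> j \<and> j \<le> state_cnt k A q"
| "nfa_edge h k A (St q) (SAux q' i) \<longleftrightarrow> q \<in> init A \<union> fin A \<and> q' = q \<and> i = 1"
| "nfa_edge h k A _ _ \<longleftrightarrow> False"

lemma in_vertices_nfa_graph [simp]: "v \<in> fst (nfa_graph h k A) \<longleftrightarrow> nfa_vertex h k A v"
  by (cases v) (auto simp: nfa_graph_def)

lemma in_edges_nfa_graph [simp]: "(u, v) \<in> snd (nfa_graph h k A) \<longleftrightarrow> nfa_edge h k A u v"
  by (cases u; cases v) (auto simp: nfa_graph_def)

lemma state_cnt_ge: "q \<in> init A \<union> fin A \<Longrightarrow> k + 1 \<le> state_cnt k A q"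
  by (auto simp: state_cnt_def)

lemma state_cnt_eq_0: "q \<notin> init A \<union> fin A \<Longrightarrow> state_cnt k A q = 0"
  by (auto simp: state_cnt_def)

lemma state_cnt_zero_or_gt: "state_cnt k A q = 0 \<or> k < state_cnt k A q"
  by (auto simp: state_cnt_def)

lemma nfa_vertex_states: "nfa_wf Sig A \<Longrightarrow> nfa_vertex h k A v \<Longrightarrow> set1_gvert v \<subseteq> states A"
  by (cases v) (auto simp: nfa_wf_def state_cnt_eq_0)

lemma init_iff_state_cnt: "q \<in> init A \<longleftrightarrow> state_cnt k A q \<in> {k + 1, k + 3}"
  by (auto simp: state_cnt_def)

lemma fin_iff_state_cnt: "q \<in> fin A \<longleftrightarrow> state_cnt k A q \<in> {k + 2, k + 3}"
  by (auto simp: state_cnt_def)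

locale labelled_nfa =
  fixes Sig :: "'a set" and h :: "'a \<Rightarrow> nat" and k :: nat and A :: "('q, 'a) nfa"
  assumes wf: "nfa_wf Sig A"
    and label_range: "\<And>a. a \<in> Sig \<Longrightarrow> 1 \<le> h a \<and> h a \<le> k"
begin

abbreviation "V \<equiv> fst (nfa_graph h k A)"
abbreviation "E \<equiv> snd (nfa_graph h k A)"

lemma lbl_in_Sig: "t \<in> trans A \<Longrightarrow> lbl t \<in> Sig"
  using wf by (auto simp: nfa_wf_def lbl_def)

lemma trans_states: "(p, a, q) \<in> trans A \<Longrightarrow> p \<in> states A \<and> q \<in> states A"
  using wf by (auto simp: nfa_wf_def)

lemma init_fin_states: "q \<in> init A \<union> fin A \<Longrightarrow> q \<in> states A"
  using wf by (auto simp: nfa_wf_def)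

lemma edges_subset: "E \<subseteq> V \<times> V"
proof (rule subrelI)
  fix u v assume "(u, v) \<in> E"
  then show "(u, v) \<in> V \<times> V"
    using label_range[OF lbl_in_Sig] trans_states init_fin_states state_cnt_ge[of _ A k]
    by (cases u; cases v) (auto, fastforce+)
qed

lemma loop_successor_degrees_St:
  assumes "q \<in> states A"
  shows "loop_successor_degrees E (St q) = {state_cnt k A q} - {0}"
proof (cases "q \<in> init A \<union> fin A")
  case True
  have "{w. nfa_edge h k A (St q) w \<and> has_loop E w} = {SAux q 1}"
    using True state_cnt_ge[of q A k] by (auto elim: nfa_edge.elims simp: has_loop_def)
  moreover have "{w. nfa_edge h k A (SAux q 1) w} = SAux q ` {1..state_cnt k A q}"
    using True state_cnt_ge[of q A k] by (auto elim: nfa_edge.elims)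
  ultimately show ?thesis
    using True state_cnt_ge[of q A k]
    by (simp add: loop_successor_degrees_def out_degree_def card_image inj_on_def)
next
  case False
  then have "{w. nfa_edge h k A (St q) w \<and> has_loop E w} = {}"
    by (auto elim: nfa_edge.elims simp: has_loop_def)
  then show ?thesis
    using False by (simp add: loop_successor_degrees_def state_cnt_eq_0)
qed

lemma loop_successor_degrees_Tr:
  assumes t: "t \<in> trans A"
  shows "loop_successor_degrees E (Tr t) = {h (lbl t)}"
proof -
  have h: "1 \<le> h (lbl t)" using label_range[OF lbl_in_Sig[OF t]] by simp
  have "{w. nfa_edge h k A (Tr t) w \<and> has_loop E w} = {TAux t 1}"
    using t h by (auto elim: nfa_edge.elims simp: has_loop_def)
  moreover have "{w. nfa_edge h k A (TAux t 1) w} = TAux t ` {1..h (lbl t)}"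
    using t h by (auto elim: nfa_edge.elims)
  ultimately show ?thesis
    by (simp add: loop_successor_degrees_def out_degree_def card_image inj_on_def)
qed

lemma St_vertex_iff:
  assumes "v \<in> V"
  shows "(\<exists>q. v = St q) \<longleftrightarrow> \<not> has_loop E v \<and> (\<forall>m \<in> loop_successor_degrees E v. k < m)"
proof (cases v)
  case (St q)
  with assms have "q \<in> states A" by simp
  then show ?thesis
    using St state_cnt_zero_or_gt[of k A q]
    by (auto simp: loop_successor_degrees_St has_loop_def)
next
  case (Tr t)
  with assms have "t \<in> trans A" by simp
  then show ?thesis
    using Tr label_range[OF lbl_in_Sig[of t]]
    by (cases t) (auto simp: loop_successor_degrees_Tr has_loop_def)
qed (use assms in \<open>auto simp: has_loop_def\<close>)

lemma Tr_vertex_iff: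
  assumes "v \<in> V"
  shows "(\<exists>t. v = Tr t) \<longleftrightarrow> \<not> has_loop E v \<and> (\<exists>m \<in> loop_successor_degrees E v. m \<le> k)"
proof (cases v)
  case (St q)
  with assms have "q \<in> states A" by simp
  then show ?thesis
    using St state_cnt_zero_or_gt[of k A q]
    by (auto simp: loop_successor_degrees_St)
next
  case (Tr t)
  with assms have "t \<in> trans A" by simp
  then show ?thesis
    using Tr label_range[OF lbl_in_Sig[of t]]
    by (cases t) (auto simp: loop_successor_degrees_Tr has_loop_def)
qed (use assms in \<open>auto simp: has_loop_def\<close>)

end

section \<open>Transporting an automaton isomorphism to the graphs\<close>

locale nfa_isomorphism =
  fixes Sig :: "'a set" and A1 :: "('q1, 'a) nfa" and A2 :: "('q2, 'a) nfa" and \<phi> :: "'q1 \<Rightarrow> 'q2"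
  assumes wf1: "nfa_wf Sig A1" and wf2: "nfa_wf Sig A2"
    and bij: "bij_betw \<phi> (states A1) (states A2)"
    and init_image: "\<phi> ` init A1 = init A2" and fin_image: "\<phi> ` fin A1 = fin A2"
    and trans_iff: "\<And>p a q. p \<in> states A1 \<Longrightarrow> q \<in> states A1 \<Longrightarrow>
                      (p, a, q) \<in> trans A1 \<longleftrightarrow> (\<phi> p, a, \<phi> q) \<in> trans A2"
begin

lemma inj: "inj_on \<phi> (states A1)"
  using bij by (rule bij_betw_imp_inj_on)

lemma init_iff: "q \<in> states A1 \<Longrightarrow> \<phi> q \<in> init A2 \<longleftrightarrow> q \<in> init A1"
  using wf1 init_image inj_on_image_mem_iff[OF inj] by (auto simp: nfa_wf_def)

lemma fin_iff: "q \<in> states A1 \<Longrightarrow> \<phi> q \<in> fin A2 \<longleftrightarrow> q \<in> fin A1"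
  using wf1 fin_image inj_on_image_mem_iff[OF inj] by (auto simp: nfa_wf_def)

lemma state_cnt_eq: "q \<in> states A1 \<Longrightarrow> state_cnt k A2 (\<phi> q) = state_cnt k A1 q"
  by (simp add: state_cnt_def init_iff fin_iff)

lemma inverse: "nfa_isomorphism Sig A2 A1 (inv_into (states A1) \<phi>)"
proof
  let ?\<psi> = "inv_into (states A1) \<phi>"
  show "bij_betw ?\<psi> (states A2) (states A1)"
    using bij by (rule bij_betw_inv_into)
  show "?\<psi> ` init A2 = init A1" "?\<psi> ` fin A2 = fin A1"
    using wf1 inv_into_image_cancel[OF inj] by (auto simp: nfa_wf_def simp flip: init_image fin_image)
  fix p a q assume "p \<in> states A2" "q \<in> states A2"
  then show "(p, a, q) \<in> trans A2 \<longleftrightarrow> (?\<psi> p, a, ?\<psi> q) \<in> trans A1"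
    using trans_iff[of "?\<psi> p" "?\<psi> q" a] bij_betw_inv_into_right[OF bij] bij_betw_inv_into[OF bij]
    by (auto simp: bij_betw_def)
qed (use wf1 wf2 in auto)

lemma nfa_vertex_map_iff:
  "set1_gvert v \<subseteq> states A1 \<Longrightarrow> nfa_vertex h k A2 (map_gvert \<phi> id v) \<longleftrightarrow> nfa_vertex h k A1 v"
  using bij by (cases v) (auto simp: bij_betw_def lbl_def trans_iff init_iff fin_iff state_cnt_eq)

lemma nfa_edge_map_iff:
  assumes "set1_gvert u \<subseteq> states A1" "set1_gvert v \<subseteq> states A1"
  shows "nfa_edge h k A2 (map_gvert \<phi> id u) (map_gvert \<phi> id v) \<longleftrightarrow> nfa_edge h k A1 u v"
  using assms inj
  by (cases u; cases v) (auto simp: inj_on_def lbl_def trans_iff init_iff fin_iff state_cnt_eq)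

lemma graphs_isomorphic: "digraph_iso (nfa_graph h k A1) (nfa_graph h k A2)"
proof -
  interpret inv: nfa_isomorphism Sig A2 A1 "inv_into (states A1) \<phi>"
    by (rule inverse)
  let ?g = "map_gvert \<phi> id" and ?g' = "map_gvert (inv_into (states A1) \<phi>) id"
  have states1: "set1_gvert v \<subseteq> states A1" if "nfa_vertex h k A1 v" for v
    using nfa_vertex_states[OF wf1 that] .
  have states2: "set1_gvert w \<subseteq> states A2" if "nfa_vertex h k A2 w" for w
    using nfa_vertex_states[OF wf2 that] .
  have "?g' (?g v) = v" if "nfa_vertex h k A1 v" for v
    using states1[OF that] bij_betw_inv_into_left[OF bij]
    by (auto simp: gvert.map_comp intro!: gvert.map_ident_strong)
  moreover have "?g (?g' w) = w" if "nfa_vertex h k A2 w" for w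
    using states2[OF that] bij_betw_inv_into_right[OF bij]
    by (auto simp: gvert.map_comp intro!: gvert.map_ident_strong)
  ultimately have "bij_betw ?g (fst (nfa_graph h k A1)) (fst (nfa_graph h k A2))"
    using states1 states2 nfa_vertex_map_iff inv.nfa_vertex_map_iff
    by (intro bij_betw_byWitness[where f' = ?g']) auto
  then show ?thesis
    unfolding digraph_iso_def using states1 nfa_edge_map_iff by auto
qed

end

lemma digraph_iso_nfa_graph_if_nfa_iso:
  assumes "nfa_wf Sig A1" "nfa_wf Sig A2" "nfa_iso A1 A2"
  shows "digraph_iso (nfa_graph h k A1) (nfa_graph h k A2)"
proof -
  obtain \<phi> where "bij_betw \<phi> (states A1) (states A2) \<and>
      \<phi> ` init A1 = init A2 \<and> \<phi> ` fin A1 = fin A2 \<and>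
      (\<forall>p\<in>states A1. \<forall>a. \<forall>q\<in>states A1. (p, a, q) \<in> trans A1 \<longleftrightarrow> (\<phi> p, a, \<phi> q) \<in> trans A2)"
    using assms(3) unfolding nfa_iso_def by (elim exE)
  with assms(1,2) have "nfa_isomorphism Sig A1 A2 \<phi>"
    by unfold_locales (simp_all only: Ball_def)
  then show ?thesis
    by (rule nfa_isomorphism.graphs_isomorphic)
qed

section \<open>Recovering the automaton from its graph\<close>

locale nfa_graph_isomorphism =
  A1: labelled_nfa Sig h k A1 + A2: labelled_nfa Sig h k A2
  for Sig :: "'a set" and h k and A1 :: "('q1, 'a) nfa" and A2 :: "('q2, 'a) nfa" +
  fixes f :: "('q1, 'a) gvert \<Rightarrow> ('q2, 'a) gvert"
  assumes h_inj: "inj_on h Sig"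
    and f_bij: "bij_betw f A1.V A2.V"
    and f_edge_iff: "\<And>u v. u \<in> A1.V \<Longrightarrow> v \<in> A1.V \<Longrightarrow> (u, v) \<in> A1.E \<longleftrightarrow> (f u, f v) \<in> A2.E"
begin

sublocale G: digraph_isomorphism A1.V A1.E A2.V A2.E f
  using f_bij f_edge_iff A1.edges_subset A2.edges_subset by unfold_locales

lemma f_in_V: "v \<in> A1.V \<Longrightarrow> f v \<in> A2.V"
  using f_bij by (auto simp: bij_betw_def)

lemma f_surj: "w \<in> A2.V \<Longrightarrow> \<exists>v \<in> A1.V. f v = w"
  using f_bij by (metis bij_betw_imp_surj_on imageE)

lemma f_St_iff:
  assumes v: "v \<in> A1.V"
  shows "(\<exists>q. f v = St q) \<longleftrightarrow> (\<exists>q. v = St q)"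
  using A2.St_vertex_iff[OF f_in_V[OF v]] A1.St_vertex_iff[OF v]
  by (simp only: G.has_loop_iff[OF v] G.loop_successor_degrees_eq[OF v])

lemma f_Tr_iff:
  assumes v: "v \<in> A1.V"
  shows "(\<exists>t. f v = Tr t) \<longleftrightarrow> (\<exists>t. v = Tr t)"
  using A2.Tr_vertex_iff[OF f_in_V[OF v]] A1.Tr_vertex_iff[OF v]
  by (simp only: G.has_loop_iff[OF v] G.loop_successor_degrees_eq[OF v])

definition state_map :: "'q1 \<Rightarrow> 'q2" where
  "state_map q = (case f (St q) of St q' \<Rightarrow> q')"

lemma f_St: "q \<in> states A1 \<Longrightarrow> f (St q) = St (state_map q)"
  using f_St_iff[of "St q"] by (auto simp: state_map_def)

lemma state_map_in_states: "q \<in> states A1 \<Longrightarrow> state_map q \<in> states A2"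
  using f_in_V[of "St q"] by (simp add: f_St)

lemma bij_state_map: "bij_betw state_map (states A1) (states A2)"
proof (rule bij_betw_imageI)
  show "inj_on state_map (states A1)"
  proof (rule inj_onI)
    fix p q assume "p \<in> states A1" "q \<in> states A1" "state_map p = state_map q"
    then have "f (St p) = f (St q)" "St p \<in> A1.V" "St q \<in> A1.V" by (simp_all add: f_St)
    then show "p = q" using f_bij by (auto simp: bij_betw_def dest: inj_onD)
  qed
  show "state_map ` states A1 = states A2"
  proof (intro equalityI subsetI)
    fix q' assume "q' \<in> states A2"
    then obtain v where v: "v \<in> A1.V" "f v = St q'"
      using f_surj[of "St q'"] by auto
    then obtain q where "v = St q" using f_St_iff by blast
    with v show "q' \<in> state_map ` states A1" using f_St by force
  qed (auto simp: state_map_in_states)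
qed

lemma state_cnt_state_map: "q \<in> states A1 \<Longrightarrow> state_cnt k A2 (state_map q) = state_cnt k A1 q"
  using G.loop_successor_degrees_eq[of "St q"] A1.loop_successor_degrees_St[of q]
    A2.loop_successor_degrees_St[OF state_map_in_states] f_St
  by (cases "state_cnt k A1 q = 0"; cases "state_cnt k A2 (state_map q) = 0") auto

lemma f_Tr: "(p, a, q) \<in> trans A1 \<Longrightarrow> f (Tr (p, a, q)) = Tr (state_map p, a, state_map q)"
proof -
  assume t: "(p, a, q) \<in> trans A1"
  then have pq: "p \<in> states A1" "q \<in> states A1" using A1.trans_states by auto
  obtain t' where t': "f (Tr (p, a, q)) = Tr t'" using f_Tr_iff[of "Tr (p, a, q)"] t by auto
  then have "t' \<in> trans A2" using f_in_V[of "Tr (p, a, q)"] t by simp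
  have "nfa_edge h k A2 (St (state_map p)) (Tr t')" "nfa_edge h k A2 (Tr t') (St (state_map q))"
    using f_edge_iff[of "St p" "Tr (p, a, q)"] f_edge_iff[of "Tr (p, a, q)" "St q"] t pq t' f_St
    by auto
  moreover have "h (lbl t') = h a"
    using G.loop_successor_degrees_eq[of "Tr (p, a, q)"] t t' \<open>t' \<in> trans A2\<close>
    by (simp add: A1.loop_successor_degrees_Tr A2.loop_successor_degrees_Tr lbl_def)
  then have "lbl t' = a"
    using h_inj A1.lbl_in_Sig[OF t] A2.lbl_in_Sig[OF \<open>t' \<in> trans A2\<close>]
    by (auto simp: lbl_def inj_on_def)
  ultimately show ?thesis
    using t' by (cases t') (auto simp: lbl_def)
qed

lemma trans_iff:
  assumes pq: "p \<in> states A1" "q \<in> states A1"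
  shows "(p, a, q) \<in> trans A1 \<longleftrightarrow> (state_map p, a, state_map q) \<in> trans A2"
proof
  assume "(p, a, q) \<in> trans A1"
  then show "(state_map p, a, state_map q) \<in> trans A2"
    using f_in_V[of "Tr (p, a, q)"] f_Tr by auto
next
  assume t': "(state_map p, a, state_map q) \<in> trans A2"
  then obtain v where v: "v \<in> A1.V" "f v = Tr (state_map p, a, state_map q)"
    using f_surj[of "Tr (state_map p, a, state_map q)"] by auto
  then obtain p1 a1 q1 where v_eq: "v = Tr (p1, a1, q1)"
    using f_Tr_iff[of v] by (metis prod_cases3)
  with v have t: "(p1, a1, q1) \<in> trans A1" by simp
  then have "state_map p1 = state_map p" "a1 = a" "state_map q1 = state_map q"
    using v v_eq f_Tr by auto
  moreover have "p1 \<in> states A1" "q1 \<in> states A1" using A1.trans_states[OF t] by auto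
  ultimately have "p1 = p" "q1 = q"
    using bij_state_map pq by (auto simp: bij_betw_def dest: inj_onD)
  with t \<open>a1 = a\<close> show "(p, a, q) \<in> trans A1" by simp
qed

lemma automata_isomorphic: "nfa_iso A1 A2"
proof -
  have "state_map ` init A1 = init A2"
  proof (rule image_eq_if_bij_betw_mem_iff[OF bij_state_map])
    show "state_map q \<in> init A2 \<longleftrightarrow> q \<in> init A1" if "q \<in> states A1" for q
      using state_cnt_state_map[OF that] by (simp add: init_iff_state_cnt[where k = k])
  qed (use A1.init_fin_states A2.init_fin_states in auto)
  moreover have "state_map ` fin A1 = fin A2"
  proof (rule image_eq_if_bij_betw_mem_iff[OF bij_state_map])
    show "state_map q \<in> fin A2 \<longleftrightarrow> q \<in> fin A1" if "q \<in> states A1" for q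
      using state_cnt_state_map[OF that] by (simp add: fin_iff_state_cnt[where k = k])
  qed (use A1.init_fin_states A2.init_fin_states in auto)
  ultimately show ?thesis
    unfolding nfa_iso_def using bij_state_map trans_iff by blast
qed

end

lemma nfa_iso_if_digraph_iso_nfa_graph:
  assumes "labelled_nfa Sig h k A1" "labelled_nfa Sig h k A2" "inj_on h Sig"
    and "digraph_iso (nfa_graph h k A1) (nfa_graph h k A2)"
  shows "nfa_iso A1 A2"
proof -
  obtain f where "bij_betw f (fst (nfa_graph h k A1)) (fst (nfa_graph h k A2)) \<and>
     (\<forall>u\<in>fst (nfa_graph h k A1). \<forall>v\<in>fst (nfa_graph h k A1).
        (u, v) \<in> snd (nfa_graph h k A1) \<longleftrightarrow> (f u, f v) \<in> snd (nfa_graph h k A2))"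
    using assms(4) unfolding digraph_iso_def by (elim exE)
  with assms(1-3) have "nfa_graph_isomorphism Sig h k A1 A2 f"
    by (intro nfa_graph_isomorphism.intro nfa_graph_isomorphism_axioms.intro) (simp_all only: Ball_def)
  then show ?thesis
    by (rule nfa_graph_isomorphism.automata_isomorphic)
qed

theorem proposition4:
  fixes Sig :: "'a set" and h :: "'a \<Rightarrow> nat"
    and A1 :: "('q1, 'a) nfa" and A2 :: "('q2, 'a) nfa"
  assumes "finite Sig"
    and "bij_betw h Sig {1..card Sig}"
    and "nfa_wf Sig A1" and "nfa_wf Sig A2"
  shows "nfa_iso A1 A2 \<longleftrightarrow>
         digraph_iso (nfa_graph h (card Sig) A1) (nfa_graph h (card Sig) A2)"
proof
  assume "nfa_iso A1 A2"
  with assms(3,4) show "digraph_iso (nfa_graph h (card Sig) A1) (nfa_graph h (card Sig) A2)"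
    by (rule digraph_iso_nfa_graph_if_nfa_iso)
next
  have "1 \<le> h a \<and> h a \<le> card Sig" if "a \<in> Sig" for a
    using bij_betw_apply[OF assms(2) that] by simp
  then have "labelled_nfa Sig h (card Sig) A1" "labelled_nfa Sig h (card Sig) A2"
    using assms(3,4) by (simp_all add: labelled_nfa_def)
  moreover have "inj_on h Sig"
    using assms(2) by (rule bij_betw_imp_inj_on)
  moreover assume "digraph_iso (nfa_graph h (card Sig) A1) (nfa_graph h (card Sig) A2)"
  ultimately show "nfa_iso A1 A2"
    by (rule nfa_iso_if_digraph_iso_nfa_graph)
qed

end
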